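(* Let $(X,\mathcal{A})$ be a cross resolvable design with $v$ points, $b$ blocks of size $k$, $r$ parallel classes and $b_r=b/r$ blocks per parallel class, and let $z\in\{2,\dots,r\}$ be such that $\mu_z$ exists. Consider the multi-access coded caching scheme built from it (described in the context). Then for every point $x\in X$, the number of users having access to subfile index $x$ (i.e., users $U_H$ with $x\in\bigcup_{B\in H}B$) is exactly $\binom{r}{z}\left(b_r^z-(b_r-1)^z\right)$.
   Context: A resolvable design $(X,\mathcal{A})$: $X$ a finite set of $v$ points, $\mathcal{A}$ a collection of $b$ blocks (subsets of $X$) each of size $k$, partitioned into $r$ parallel classes, each parallel class being a set of $b_r=b/r=v/k$ pairwise disjoint blocks whose union is $X$. The $z$-th cross intersection number $\mu_z$ exists if $|B_1\cap\cdots\cap B_z|$ equals the same nonzero value $\mu_z$ for every choice of blocks from $z$ distinct parallel classes; the design is cross resolvable if some $\mu_i$, $i\in\{2,\dots,r\}$, exists. Multi-access scheme: there are $b$ caches, one for each block; there are $K=\binom{r}{z}b_r^z$ users $U_H$, one for each set $H$ of $z$ blocks taken from $z$ distinct parallel classes, and user $U_H$ is connected to the $z$ caches corresponding to the blocks in $H$. Each of $N$ files $W_i$ is split into $v$ equal subfiles $W_{i,x}$, $x\in X$, and the cache of block $A_j$ stores $W_{i,x}$ for all $x\in A_j$ and all $i\in[N]$. A user has access to subfile index $x$ if $x$ lies in one of the blocks of the caches it is connected to. *)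

theory Defs
  imports Main "HOL-Library.FuncSet"
begin

text \<open>Blocks are indexed by (class, block), so
  repeated blocks in different classes are allowed.\<close>
definition resolvable_design :: "'a set \<Rightarrow> nat \<Rightarrow> nat \<Rightarrow> (nat \<Rightarrow> 'a set set) \<Rightarrow> bool" where
  "resolvable_design X k r P \<longleftrightarrow>
     finite X \<and> X \<noteq> {} \<and> k > 0 \<and> r \<ge> 1 \<and>
     (\<forall>i<r. (\<forall>B\<in>P i. B \<subseteq> X \<and> card B = k) \<and>
            (\<forall>B\<in>P i. \<forall>B'\<in>P i. B \<noteq> B' \<longrightarrow> B \<inter> B' = {}) \<and>
            \<Union>(P i) = X)"

definition blocks_per_class :: "'a set \<Rightarrow> nat \<Rightarrow> nat" where
  "blocks_per_class X k = card X div k"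

definition cross_choices :: "nat \<Rightarrow> (nat \<Rightarrow> 'a set set) \<Rightarrow> nat \<Rightarrow> (nat set \<times> (nat \<Rightarrow> 'a set)) set" where
  "cross_choices r P z = {(S, f). S \<subseteq> {..<r} \<and> card S = z \<and> f \<in> (\<Pi>\<^sub>E i\<in>S. P i)}"

definition cross_intersection_number :: "nat \<Rightarrow> (nat \<Rightarrow> 'a set set) \<Rightarrow> nat \<Rightarrow> nat \<Rightarrow> bool" where
  "cross_intersection_number r P z mu \<longleftrightarrow> mu > 0 \<and>
     (\<forall>(S, f) \<in> cross_choices r P z. card (\<Inter>i\<in>S. f i) = mu)"

definition mu_exists :: "nat \<Rightarrow> (nat \<Rightarrow> 'a set set) \<Rightarrow> nat \<Rightarrow> bool" where
  "mu_exists r P z \<longleftrightarrow> (\<exists>mu. cross_intersection_number r P z mu)"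

definition cross_resolvable_design :: "'a set \<Rightarrow> nat \<Rightarrow> nat \<Rightarrow> (nat \<Rightarrow> 'a set set) \<Rightarrow> bool" where
  "cross_resolvable_design X k r P \<longleftrightarrow> resolvable_design X k r P \<and>
     (\<exists>i\<in>{2..r}. mu_exists r P i)"

text \<open>Users of the multi-access scheme: one user U_H per choice H of z blocks from
  z distinct classes; user U_H has access to subfile index x iff x lies in a block of H.\<close>
definition users_accessing :: "nat \<Rightarrow> (nat \<Rightarrow> 'a set set) \<Rightarrow> nat \<Rightarrow> 'a \<Rightarrow> (nat set \<times> (nat \<Rightarrow> 'a set)) set" where
  "users_accessing r P z x = {(S, f) \<in> cross_choices r P z. x \<in> (\<Union>i\<in>S. f i)}"

end

theory Submission
  imports Defs
begin

text \<open>Every parallel class has b_r blocks, exactly one of which contains a given point x.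
  So among the b_r^z choices of blocks from a fixed set of z classes, (b_r - 1)^z avoid x
  altogether, and all others give a user with access to x; there are r choose z such
  sets of classes.\<close>

lemma card_PiE_meeting:
  assumes "finite S" "\<And>i. i \<in> S \<Longrightarrow> finite (A i)"
  shows "card {f \<in> PiE S A. \<exists>i\<in>S. f i \<in> C i} = (\<Prod>i\<in>S. card (A i)) - (\<Prod>i\<in>S. card (A i - C i))"
proof -
  have "{f \<in> PiE S A. \<exists>i\<in>S. f i \<in> C i} = PiE S A - PiE S (\<lambda>i. A i - C i)"
    by (auto simp: PiE_iff extensional_def)
  moreover have "PiE S (\<lambda>i. A i - C i) \<subseteq> PiE S A"
    by (auto simp: PiE_iff)
  moreover have "finite (PiE S (\<lambda>i. A i - C i))"
    using assms by (intro finite_PiE) auto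
  ultimately show ?thesis
    by (simp add: card_Diff_subset card_PiE assms(1))
qed

lemma card_Sigma_const:
  assumes "finite A" "\<And>a. a \<in> A \<Longrightarrow> finite (B a)" "\<And>a. a \<in> A \<Longrightarrow> card (B a) = c"
  shows "card (Sigma A B) = card A * c"
  using assms by (simp add: card_SigmaI)

context
  fixes X :: "'a set" and k r :: nat and P :: "nat \<Rightarrow> 'a set set" and i :: nat
  assumes design: "resolvable_design X k r P" and class_index: "i < r"
begin

private lemma class_props:
  "finite X" "k > 0" "\<And>B. B \<in> P i \<Longrightarrow> B \<subseteq> X \<and> card B = k"
  "\<And>B B'. B \<in> P i \<Longrightarrow> B' \<in> P i \<Longrightarrow> B \<noteq> B' \<Longrightarrow> B \<inter> B' = {}" "\<Union>(P i) = X"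
  using design class_index unfolding resolvable_design_def by auto

lemma resolvable_design_finite_class: "finite (P i)"
  using class_props(1,3) by (meson Pow_iff finite_Pow_iff finite_subset subsetI)

lemma resolvable_design_card_class: "card (P i) = blocks_per_class X k"
proof -
  have "card X = card (\<Union>(P i))"
    using class_props(5) by simp
  also have "\<dots> = sum card (P i)"
    using class_props(1,3,4)
    by (intro card_Union_disjoint) (auto simp: pairwise_def disjnt_def intro: finite_subset)
  also have "\<dots> = card (P i) * k"
    using class_props(3) by simp
  finally show ?thesis
    unfolding blocks_per_class_def using class_props(2) by simp
qed

lemma resolvable_design_card_class_avoiding:
  assumes "x \<in> X"
  shows "card (P i - {B. x \<in> B}) = blocks_per_class X k - 1"
proof -
  obtain B0 where "B0 \<in> P i" "x \<in> B0"
    using assms class_props(5) by auto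
  then have "P i - {B. x \<in> B} = P i - {B0}"
    using class_props(4) by blast
  with \<open>B0 \<in> P i\<close> show ?thesis
    using resolvable_design_finite_class resolvable_design_card_class by simp
qed

end

lemma resolvable_design_finite_choices:
  assumes "resolvable_design X k r P" "S \<subseteq> {..<r}"
  shows "finite (PiE S P)"
  using assms finite_subset[OF assms(2)]
  by (intro finite_PiE) (auto intro: resolvable_design_finite_class)

lemma resolvable_design_card_choices_meeting:
  assumes design: "resolvable_design X k r P" and S: "S \<subseteq> {..<r}" and "x \<in> X"
  shows "card {f \<in> PiE S P. \<exists>i\<in>S. f i \<in> {B. x \<in> B}} =
           blocks_per_class X k ^ card S - (blocks_per_class X k - 1) ^ card S"
proof -
  have in_range: "i \<in> S \<Longrightarrow> i < r" for i
    using S by auto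
  have "card {f \<in> PiE S P. \<exists>i\<in>S. f i \<in> {B. x \<in> B}} =
      (\<Prod>i\<in>S. card (P i)) - (\<Prod>i\<in>S. card (P i - {B. x \<in> B}))"
    using finite_subset[OF S] in_range
    by (intro card_PiE_meeting) (auto intro: resolvable_design_finite_class[OF design])
  also have "\<dots> = blocks_per_class X k ^ card S - (blocks_per_class X k - 1) ^ card S"
    using in_range \<open>x \<in> X\<close>
    by (simp add: resolvable_design_card_class[OF design] resolvable_design_card_class_avoiding[OF design])
  finally show ?thesis .
qed

lemma users_accessing_eq_Sigma:
  "users_accessing r P z x =
     Sigma {S. S \<subseteq> {..<r} \<and> card S = z} (\<lambda>S. {f \<in> PiE S P. \<exists>i\<in>S. f i \<in> {B. x \<in> B}})"
  unfolding users_accessing_def cross_choices_def by auto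

theorem lemma2:
  fixes X :: "'a set" and k r z :: nat and P :: "nat \<Rightarrow> 'a set set" and x :: 'a
  assumes "cross_resolvable_design X k r P"
    and "z \<in> {2..r}"
    and "mu_exists r P z"
    and "x \<in> X"
  shows "card (users_accessing r P z x) =
           (r choose z) * (blocks_per_class X k ^ z - (blocks_per_class X k - 1) ^ z)"
proof -
  let ?b = "blocks_per_class X k"
  have design: "resolvable_design X k r P"
    using assms(1) unfolding cross_resolvable_design_def by simp
  have "card (users_accessing r P z x) =
      card {S. S \<subseteq> {..<r} \<and> card S = z} * (?b ^ z - (?b - 1) ^ z)"
    unfolding users_accessing_eq_Sigma
    using resolvable_design_card_choices_meeting[OF design _ assms(4)]
      resolvable_design_finite_choices[OF design]
    by (intro card_Sigma_const) auto
  then show ?thesis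
    using n_subsets[of "{..<r}" z] by simp
qed

end
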